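(* Let $\alpha_1,\alpha_2$ be distinct closed cells of $\widetilde{V}_1$ whose intersection $\alpha=\alpha_1\cap\alpha_2$ is a common face. Then $N^\circ_{\alpha_1}\cap N^\circ_{\alpha_2}=N^\circ_{\alpha}$.
   Context: Let $\widetilde{W}$ be the well-rounded retract for $\mathrm{SL}_4$: the set of positive definite real symmetric $4\times4$ matrices $A$ with $\min\{xAx^t: x\in\mathbb{Z}^4\setminus\{0\}\}=1$ whose minimal vectors span $\mathbb{R}^4$; it is a locally finite regular cell complex with convex closed cells, and with respect to a fixed triangulation its first barycentric subdivision is a simplicial complex. Let $\sigma$ be the $6$-cell whose minimal vectors are $\pm e_1,\dots,\pm e_4$, let $\mathrm{Sp}_4(\mathbb{Z})$ be the integer matrices $g$ with $g\Omega g^t=\Omega$ for $\Omega$ with rows $(0,0,0,1),(0,0,1,0),(0,-1,0,0),(-1,0,0,0)$, acting by $A\mapsto \gamma A\gamma^t$, and let $\widetilde{V}_1=\bigcup_{\gamma\in\mathrm{Sp}_4(\mathbb{Z})}\gamma\cdot\sigma$, viewed as a simplicial subcomplex of the first barycentric subdivision of $\widetilde{W}$. For a simplicial complex $K$ and a vertex $v$, $\overline{\mathrm{star}}(v;K)$ is the closure of the set of simplices having $v$ as a face; for a full subcomplex $K_0$ (no simplex of $K\setminus K_0$ has all vertices in $K_0$), $N(K_0;K)=\bigcup_{v\text{ vertex of }K_0}\overline{\mathrm{star}}(v;K)$. Writing $K^{(2)}$ for the second barycentric subdivision, for each closed cell $\alpha$ of $\widetilde{V}_1$ let $N_\alpha=|N(\alpha^{(2)};\widetilde{V}_1^{(2)})|$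 (the second derived neighborhood of $\alpha$) and $N^\circ_\alpha$ its interior. *)

theory Defs
  imports "HOL-Analysis.Analysis"
begin

type_synonym mat4 = "real^4^4"
type_synonym vec4 = "real^4"

definition int_vec :: "vec4 \<Rightarrow> bool" where
  "int_vec x \<longleftrightarrow> (\<forall>i. x $ i \<in> \<int>)"

definition qf :: "mat4 \<Rightarrow> vec4 \<Rightarrow> real" where
  "qf A x = x \<bullet> (A *v x)"

definition pos_def_sym :: "mat4 \<Rightarrow> bool" where
  "pos_def_sym A \<longleftrightarrow> transpose A = A \<and> (\<forall>x. x \<noteq> 0 \<longrightarrow> qf A x > 0)"

definition arith_min :: "mat4 \<Rightarrow> real" where
  "arith_min A = Inf {qf A x | x. int_vec x \<and> x \<noteq> 0}"

definition min_vecs :: "mat4 \<Rightarrow> vec4 set" where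
  "min_vecs A = {x. int_vec x \<and> x \<noteq> 0 \<and> qf A x = arith_min A}"

definition WR :: "mat4 set" where
  "WR = {A. pos_def_sym A \<and> arith_min A = 1 \<and> span (min_vecs A) = UNIV}"

definition wr_cell :: "vec4 set \<Rightarrow> mat4 set" where
  "wr_cell M = closure {A \<in> WR. min_vecs A = M}"

definition WR_cells :: "mat4 set set" where
  "WR_cells = {wr_cell (min_vecs A) | A. A \<in> WR}"

definition sigma6 :: "mat4 set" where
  "sigma6 = wr_cell {x. \<exists>i. x = axis i 1 \<or> x = - axis i 1}"

definition Omega :: mat4 where
  "Omega = vector [vector [0,0,0,1], vector [0,0,1,0],
                   vector [0,-1,0,0], vector [-1,0,0,0]]"

definition Sp4Z :: "mat4 set" where
  "Sp4Z = {g. (\<forall>i j. g $ i $ j \<in> \<int>) \<and> g ** Omega ** transpose g = Omega}"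

definition act :: "mat4 \<Rightarrow> mat4 \<Rightarrow> mat4" where
  "act g A = g ** A ** transpose g"

definition V1 :: "mat4 set" where
  "V1 = (\<Union>g\<in>Sp4Z. act g ` sigma6)"

text \<open>closed cells of V_1: the cells of W that are faces of some translate g.sigma\<close>
definition V1_cells :: "mat4 set set" where
  "V1_cells = {c \<in> WR_cells. \<exists>g\<in>Sp4Z. c \<subseteq> act g ` sigma6}"

definition is_chain :: "'a set set \<Rightarrow> 'a set set \<Rightarrow> bool" where
  "is_chain F ch \<longleftrightarrow> finite ch \<and> ch \<noteq> {} \<and> ch \<subseteq> F \<and>
     (\<forall>X\<in>ch. \<forall>Y\<in>ch. X \<subseteq> Y \<or> Y \<subseteq> X)"

text \<open>simplices of the barycentric subdivision of a complex with closed convex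
  cells F, using the chosen barycentre b c (a point of the relative interior of c)\<close>
definition bary_sd :: "(mat4 set \<Rightarrow> mat4) \<Rightarrow> mat4 set set \<Rightarrow> mat4 set set" where
  "bary_sd b F = {convex hull (b ` ch) | ch. is_chain F ch}"

definition valid_bary :: "(mat4 set \<Rightarrow> mat4) \<Rightarrow> mat4 set set \<Rightarrow> bool" where
  "valid_bary b F \<longleftrightarrow> (\<forall>c\<in>F. b c \<in> rel_interior c)"

definition cstar :: "mat4 \<Rightarrow> mat4 set set \<Rightarrow> mat4 set" where
  "cstar v K = \<Union>{S \<in> K. v extreme_point_of S}"

definition sub_vertices :: "mat4 set \<Rightarrow> mat4 set set \<Rightarrow> mat4 set" where
  "sub_vertices X K = {v. \<exists>S\<in>K. S \<subseteq> X \<and> v extreme_point_of S}"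

text \<open>|N(K_0;K)| for K_0 the subcomplex of simplices of K contained in X\<close>
definition sd_nbhd :: "mat4 set \<Rightarrow> mat4 set set \<Rightarrow> mat4 set" where
  "sd_nbhd X K = (\<Union>v\<in>sub_vertices X K. cstar v K)"

text \<open>N_alpha (second derived neighbourhood in V_1) and its interior in |V_1|\<close>
definition N_alpha :: "(mat4 set \<Rightarrow> mat4) \<Rightarrow> (mat4 set \<Rightarrow> mat4) \<Rightarrow> mat4 set \<Rightarrow> mat4 set" where
  "N_alpha b1 b2 \<alpha> = sd_nbhd \<alpha> (bary_sd b2 (bary_sd b1 V1_cells))"

definition N_alpha_int :: "(mat4 set \<Rightarrow> mat4) \<Rightarrow> (mat4 set \<Rightarrow> mat4) \<Rightarrow> mat4 set \<Rightarrow> mat4 set" where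
  "N_alpha_int b1 b2 \<alpha> = (top_of_set V1) interior_of (N_alpha b1 b2 \<alpha>)"

end

theory Submission
  imports Defs
begin

(* The closed cells of the well-rounded retract are polyhedra, cut out in the space of symmetric
   matrices by the linear conditions x A x^t >= 1 (x integral, nonzero) and x A x^t = 1 (x minimal),
   so any two of them meet in a common face. For a family of convex sets with this property the
   barycentres of a chain of cells are affinely independent, and a point in the relative interior
   of the simplex spanned by a chain C lies in the simplex spanned by a chain C' only if C is a
   subchain of C'; in particular distinct simplices of the subdivision have disjoint relative
   interiors.

   A point x of N_alpha1 and N_alpha2 lies in simplices of the second subdivision spanned by chains
   D1, D2 of simplices of the first, where D_i contains a simplex tau_i contained in alpha_i, and
   both chains contain the simplex rho carrying x in its relative interior. If rho lies below tau1
   and tau2, then rho is contained in alpha1 Int alpha2 and the part of D1 below rho exhibits x in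
   N_(alpha1 Int alpha2). If tau1 and tau2 lie below rho, the chains of cells spanning them are
   subchains of the chain spanning rho, and comparing their top cells shows that tau1 is contained
   in alpha2 or tau2 in alpha1. The mixed cases are immediate, and interiors commute with finite
   intersections. *)

section \<open>Convex geometry\<close>

lemma rel_interior_convex_combination:
  fixes S :: "'a::euclidean_space set"
  assumes "convex S" "a \<in> rel_interior S" "q \<in> S" "0 < u" "u \<le> 1"
  shows "u *\<^sub>R a + (1 - u) *\<^sub>R q \<in> rel_interior S"
proof -
  have "q - u *\<^sub>R (q - a) \<in> rel_interior S"
    using rel_interior_convex_shrink assms by blast
  then show ?thesis by (simp add: algebra_simps)
qed

lemma rel_interior_ray_shorter:
  fixes S :: "'a::euclidean_space set"
  assumes "convex S" "a \<in> rel_interior S" "x \<in> S" "0 < s" "s < t"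
    and "s *\<^sub>R (x - a) = t *\<^sub>R (y - a)"
  shows "y \<in> rel_interior S"
proof -
  have "y - a = (1 / t) *\<^sub>R (t *\<^sub>R (y - a))"
    using assms(4,5) by simp
  also have "\<dots> = (s / t) *\<^sub>R (x - a)"
    by (simp flip: assms(6))
  finally have "y - a = (s / t) *\<^sub>R (x - a)" .
  then have "y = (1 - s / t) *\<^sub>R a + (1 - (1 - s / t)) *\<^sub>R x"
    by (simp add: algebra_simps)
  also have "\<dots> \<in> rel_interior S"
    using assms by (intro rel_interior_convex_combination) auto
  finally show ?thesis .
qed

lemma rel_boundary_ray_unique:
  fixes S :: "'a::euclidean_space set"
  assumes "convex S" "a \<in> rel_interior S"
    and "x \<in> S - rel_interior S" "y \<in> S - rel_interior S"
    and "0 < s" "0 < t" "s *\<^sub>R (x - a) = t *\<^sub>R (y - a)"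
  shows "x = y"
proof (cases s t rule: linorder_cases)
  case less
  then show ?thesis using rel_interior_ray_shorter[of S a x s t y] assms by blast
next
  case equal
  then show ?thesis using assms(6,7) by simp
next
  case greater
  then show ?thesis using rel_interior_ray_shorter[of S a y t s x] assms by (metis DiffE)
qed

lemma convex_hull_insertE:
  assumes "p \<in> convex hull (insert a S)" "S \<noteq> {}"
  obtains u q where "0 \<le> u" "u \<le> 1" "q \<in> convex hull S" "p = u *\<^sub>R a + (1 - u) *\<^sub>R q"
proof -
  have "\<exists>u\<ge>0. \<exists>v\<ge>0. \<exists>q. u + v = 1 \<and> q \<in> convex hull S \<and> p = u *\<^sub>R a + v *\<^sub>R q"
    using assms(1) by (simp only: convex_hull_insert[OF assms(2)] mem_Collect_eq)
  then obtain u v q where uvq: "0 \<le> u" "0 \<le> v" "u + v = 1" "q \<in> convex hull S"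
    "p = u *\<^sub>R a + v *\<^sub>R q"
    by blast
  show thesis
  proof (rule that[of u q])
    show "0 \<le> u" "q \<in> convex hull S" by (fact uvq(1,4))+
    show "u \<le> 1" using uvq(2,3) by linarith
    have "v = 1 - u" using uvq(3) by linarith
    then show "p = u *\<^sub>R a + (1 - u) *\<^sub>R q" using uvq(5) by simp
  qed
qed

(* The ray from the relative interior point a through q leaves S at q, so no other point of the
   relative boundary lies on it. *)
lemma convex_hull_insert_cancel:
  fixes S :: "'a::euclidean_space set"
  assumes S: "convex S" "a \<in> rel_interior S" "q \<in> S - rel_interior S"
    and T: "convex T" "T \<subseteq> S - rel_interior S"
    and u: "0 < u" "u < 1" "u *\<^sub>R a + (1 - u) *\<^sub>R q \<in> convex hull (insert a T)"
  shows "q \<in> T"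
proof -
  have "q \<noteq> a" using S by blast
  show ?thesis
  proof (cases "T = {}")
    case True
    then have "(1 - u) *\<^sub>R (q - a) = 0" using u(3) by (simp add: algebra_simps)
    then show ?thesis using \<open>q \<noteq> a\<close> u(2) by simp
  next
    case False
    obtain s q' where s: "0 \<le> s" "s \<le> 1" "q' \<in> convex hull T"
      and eq_s: "u *\<^sub>R a + (1 - u) *\<^sub>R q = s *\<^sub>R a + (1 - s) *\<^sub>R q'"
      using u(3) False by (rule convex_hull_insertE)
    have "q' \<in> T" using s(3) convex_hull_eq[THEN iffD2, OF T(1)] by simp
    have "(1 - u) *\<^sub>R (q - a) = (u *\<^sub>R a + (1 - u) *\<^sub>R q) - a"
      by (simp add: algebra_simps)
    also have "\<dots> = (1 - s) *\<^sub>R (q' - a)"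
      unfolding eq_s by (simp add: algebra_simps)
    finally have eq: "(1 - u) *\<^sub>R (q - a) = (1 - s) *\<^sub>R (q' - a)" .
    with \<open>q \<noteq> a\<close> u(2) have "s \<noteq> 1" by auto
    then have "q = q'"
      using rel_boundary_ray_unique[OF S T(2)[THEN subsetD, OF \<open>q' \<in> T\<close>] _ _ eq] u(2) s(2)
      by simp
    then show ?thesis using \<open>q' \<in> T\<close> by simp
  qed
qed

lemma rel_interior_convex_hull_insertE:
  fixes a :: "'a::euclidean_space"
  assumes indep: "\<not> affine_dependent (insert a S)" and "a \<notin> S" "S \<noteq> {}"
    and p: "p \<in> rel_interior (convex hull (insert a S))"
  obtains u q where "0 < u" "u < 1" "q \<in> rel_interior (convex hull S)"
    "p = u *\<^sub>R a + (1 - u) *\<^sub>R q"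
proof -
  have fin: "finite S" using aff_independent_finite[OF indep] by simp
  obtain w where w: "\<forall>x\<in>insert a S. 0 < w x" "sum w (insert a S) = 1"
    "(\<Sum>x\<in>insert a S. w x *\<^sub>R x) = p"
    using p unfolding rel_interior_convex_hull_explicit[OF indep] by blast
  define u where "u = w a"
  have sum_S: "sum w S = 1 - u" using w(2) fin \<open>a \<notin> S\<close> by (simp add: u_def)
  have "0 < sum w S" using w(1) fin \<open>S \<noteq> {}\<close> by (intro sum_pos) auto
  then have u: "0 < u" "u < 1" using w(1) sum_S by (auto simp: u_def)
  define q where "q = (\<Sum>x\<in>S. (w x / (1 - u)) *\<^sub>R x)"
  have indep_S: "\<not> affine_dependent S" using indep affine_dependent_subset by blast
  have "q \<in> rel_interior (convex hull S)"
    unfolding rel_interior_convex_hull_explicit[OF indep_S]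
  proof (intro CollectI exI conjI)
    show "\<forall>x\<in>S. 0 < w x / (1 - u)" using w(1) u by auto
    show "sum (\<lambda>x. w x / (1 - u)) S = 1" using sum_S u by (simp flip: sum_divide_distrib)
  qed (simp add: q_def)
  moreover have "p = u *\<^sub>R a + (1 - u) *\<^sub>R q"
  proof -
    have "(1 - u) *\<^sub>R q = (\<Sum>x\<in>S. w x *\<^sub>R x)"
      unfolding q_def scaleR_sum_right using u by (intro sum.cong) auto
    then show ?thesis using w(3) fin \<open>a \<notin> S\<close> by (simp add: u_def)
  qed
  ultimately show thesis using that u by blast
qed

lemma Union_in_is_chain: "is_chain F C \<Longrightarrow> \<Union>C \<in> C"
  unfolding is_chain_def by (intro Union_in_chain) (auto simp: subset_chain_def)

lemma is_chain_subset: "is_chain F C \<Longrightarrow> D \<subseteq> C \<Longrightarrow> D \<noteq> {} \<Longrightarrow> is_chain F D"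
  unfolding is_chain_def by (meson finite_subset subset_trans subsetD)

lemma is_chain_memD: "is_chain F C \<Longrightarrow> c \<in> C \<Longrightarrow> c \<in> F"
  unfolding is_chain_def by blast

lemma is_chain_comparable: "is_chain F C \<Longrightarrow> X \<in> C \<Longrightarrow> Y \<in> C \<Longrightarrow> X \<subseteq> Y \<or> Y \<subseteq> X"
  unfolding is_chain_def by blast

lemma is_chain_Diff_Union:
  assumes "is_chain F C" "C - {\<Union>C} \<noteq> {}"
  shows "is_chain F (C - {\<Union>C})" "C - {\<Union>C} \<subset> C" "\<Union>(C - {\<Union>C}) \<subseteq> \<Union>C"
    "\<Union>C \<notin> C - {\<Union>C}" "insert (\<Union>C) (C - {\<Union>C}) = C"
  using is_chain_subset[OF assms(1) _ assms(2)] Union_in_is_chain[OF assms(1)] by auto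

section \<open>Barycentric subdivision of a face-compatible family\<close>

definition face_compatible :: "'a::real_vector set set \<Rightarrow> bool" where
  "face_compatible F \<longleftrightarrow> (\<forall>c\<in>F. convex c) \<and> (\<forall>c\<in>F. \<forall>d\<in>F. c \<inter> d face_of c)"

definition rel_interiors_disjoint :: "'a::real_normed_vector set set \<Rightarrow> bool" where
  "rel_interiors_disjoint K \<longleftrightarrow> pairwise (\<lambda>R S. disjnt (rel_interior R) (rel_interior S)) K"

lemma rel_interiors_disjointD:
  "rel_interiors_disjoint K \<Longrightarrow> R \<in> K \<Longrightarrow> S \<in> K \<Longrightarrow> x \<in> rel_interior R \<Longrightarrow> x \<in> rel_interior S
    \<Longrightarrow> R = S"
  unfolding rel_interiors_disjoint_def pairwise_def disjnt_def by blast

lemma face_compatible_subfamily: "face_compatible G \<Longrightarrow> F \<subseteq> G \<Longrightarrow> face_compatible F"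
  by (auto simp: face_compatible_def)

lemma face_compatible_convex: "face_compatible F \<Longrightarrow> c \<in> F \<Longrightarrow> convex c"
  by (simp add: face_compatible_def)

lemma face_compatible_subset_of_rel_interior:
  fixes F :: "'a::euclidean_space set set"
  assumes "face_compatible F" "c \<in> F" "d \<in> F" "U \<subseteq> c" "x \<in> rel_interior U" "x \<in> d"
  shows "U \<subseteq> d"
proof -
  have "c \<inter> d face_of c" using assms(1-3) by (simp add: face_compatible_def)
  moreover have "(c \<inter> d) \<inter> rel_interior U \<noteq> {}"
    using assms(4-6) rel_interior_subset by blast
  ultimately have "U \<subseteq> c \<inter> d" using subset_of_face_of assms(4) by blast
  then show ?thesis by blast
qed

lemma face_compatible_rel_interiors_disjoint:
  fixes F :: "'a::euclidean_space set set"
  assumes "face_compatible F"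
  shows "rel_interiors_disjoint F"
  unfolding rel_interiors_disjoint_def pairwise_def disjnt_def
proof (intro ballI impI)
  fix c d assume cd: "c \<in> F" "d \<in> F" "c \<noteq> d"
  show "rel_interior c \<inter> rel_interior d = {}"
  proof (rule ccontr)
    assume "rel_interior c \<inter> rel_interior d \<noteq> {}"
    then obtain x where "x \<in> rel_interior c" "x \<in> rel_interior d" by blast
    then have "c \<subseteq> d" "d \<subseteq> c"
      using face_compatible_subset_of_rel_interior[OF assms] cd(1,2) rel_interior_subset
      by blast+
    then show False using cd(3) by blast
  qed
qed

lemma barycentres_subset_Union:
  assumes "\<forall>c\<in>F. b c \<in> rel_interior c" "C \<subseteq> F"
  shows "b ` C \<subseteq> \<Union>C"
  using assms rel_interior_subset by fast

lemma convex_hull_barycentres_subset: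
  assumes "\<forall>c\<in>F. b c \<in> rel_interior c" "C \<subseteq> F" "convex c" "\<Union>C \<subseteq> c"
  shows "convex hull (b ` C) \<subseteq> c"
  using barycentres_subset_Union[OF assms(1,2)] assms(3,4) by (intro hull_minimal) auto

lemma convex_hull_chainE:
  assumes C: "is_chain F C" "C - {\<Union>C} \<noteq> {}" and p: "p \<in> convex hull (b ` C)"
  obtains u q where "0 \<le> u" "u \<le> 1" "q \<in> convex hull (b ` (C - {\<Union>C}))"
    "p = u *\<^sub>R b (\<Union>C) + (1 - u) *\<^sub>R q"
proof -
  have "insert (\<Union>C) (C - {\<Union>C}) = C" by (rule is_chain_Diff_Union(5)[OF C])
  then have "insert (b (\<Union>C)) (b ` (C - {\<Union>C})) = b ` C" by blast
  then have "p \<in> convex hull (insert (b (\<Union>C)) (b ` (C - {\<Union>C})))" using p by (simp only:)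
  moreover have "b ` (C - {\<Union>C}) \<noteq> {}" using C(2) by blast
  ultimately show thesis by (rule convex_hull_insertE) (rule that)
qed

lemma convex_hull_chain_top_or_below:
  fixes F :: "'a::euclidean_space set set"
  assumes conv: "\<forall>c\<in>F. convex c" and b: "\<forall>c\<in>F. b c \<in> rel_interior c"
    and C: "is_chain F C" and p: "p \<in> convex hull (b ` C)"
  shows "p \<in> rel_interior (\<Union>C) \<or> C - {\<Union>C} \<noteq> {} \<and> p \<in> convex hull (b ` (C - {\<Union>C}))"
proof -
  have "\<Union>C \<in> C" by (rule Union_in_is_chain[OF C])
  then have conv_C: "convex (\<Union>C)" and b_C: "b (\<Union>C) \<in> rel_interior (\<Union>C)"
    using conv b is_chain_memD[OF C] by blast+
  show ?thesis
  proof (cases "C - {\<Union>C} = {}")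
    case True
    then have "b ` C = {b (\<Union>C)}" using \<open>\<Union>C \<in> C\<close> by blast
    then show ?thesis using p b_C by simp
  next
    case False
    obtain u q where u: "0 \<le> u" "u \<le> 1" and q: "q \<in> convex hull (b ` (C - {\<Union>C}))"
      and p_eq: "p = u *\<^sub>R b (\<Union>C) + (1 - u) *\<^sub>R q"
      by (rule convex_hull_chainE[OF C False p])
    have "C - {\<Union>C} \<subseteq> F" using C by (auto simp: is_chain_def)
    then have "q \<in> \<Union>C"
      using convex_hull_barycentres_subset[OF b _ conv_C] q by blast
    show ?thesis
    proof (cases "u = 0")
      case True
      then show ?thesis using False q p_eq by simp
    next
      case False
      then have "p \<in> rel_interior (\<Union>C)"
        unfolding p_eq using \<open>q \<in> \<Union>C\<close> u
        by (intro rel_interior_convex_combination[OF conv_C b_C]) auto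
      then show ?thesis by blast
    qed
  qed
qed

lemma convex_hull_chain_carrier:
  fixes F :: "'a::euclidean_space set set"
  assumes conv: "\<forall>c\<in>F. convex c" and b: "\<forall>c\<in>F. b c \<in> rel_interior c"
    and C: "is_chain F C" and p: "p \<in> convex hull (b ` C)"
  obtains c where "c \<in> C" "p \<in> rel_interior c" "p \<in> convex hull (b ` {d\<in>C. d \<subseteq> c})"
proof -
  have "finite C" using C by (simp add: is_chain_def)
  then have "\<exists>c\<in>C. p \<in> rel_interior c \<and> p \<in> convex hull (b ` {d\<in>C. d \<subseteq> c})"
    using C p
  proof (induction C arbitrary: p rule: finite_psubset_induct)
    case (psubset C)
    from convex_hull_chain_top_or_below[OF conv b psubset.prems] show ?case
    proof
      assume "p \<in> rel_interior (\<Union>C)"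
      moreover have "{d\<in>C. d \<subseteq> \<Union>C} = C" by blast
      ultimately show ?case
        using Union_in_is_chain[OF psubset.prems(1)] psubset.prems(2) by (intro bexI) simp_all
    next
      assume "C - {\<Union>C} \<noteq> {} \<and> p \<in> convex hull (b ` (C - {\<Union>C}))"
      then have ne: "C - {\<Union>C} \<noteq> {}" and p': "p \<in> convex hull (b ` (C - {\<Union>C}))" by blast+
      note C' = is_chain_Diff_Union[OF psubset.prems(1) ne]
      obtain c' where "c' \<in> C - {\<Union>C}" "p \<in> rel_interior c'"
        "p \<in> convex hull (b ` {d\<in>C - {\<Union>C}. d \<subseteq> c'})"
        using psubset.IH[OF C'(2,1) p'] by blast
      moreover have "convex hull (b ` {d\<in>C - {\<Union>C}. d \<subseteq> c'}) \<subseteq> convex hull (b ` {d\<in>C. d \<subseteq> c'})"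
        by (intro hull_mono image_mono) blast
      ultimately show ?case by blast
    qed
  qed
  then show thesis using that by blast
qed

lemma affine_hull_chain_below_disjoint_rel_interior:
  fixes F :: "'a::euclidean_space set set"
  assumes F: "face_compatible F" and b: "\<forall>c\<in>F. b c \<in> rel_interior c"
    and C: "is_chain F C" and c: "c \<in> F" "\<Union>C \<subseteq> c" "c \<notin> C"
  shows "affine hull (b ` C) \<inter> rel_interior c = {}"
proof -
  define c' where "c' = \<Union>C"
  have "c' \<in> C" unfolding c'_def by (rule Union_in_is_chain[OF C])
  then have "c' \<in> F" by (rule is_chain_memD[OF C])
  have "c' \<subseteq> c" using c(2) by (simp add: c'_def)
  have "c \<inter> c' face_of c" using F c(1) \<open>c' \<in> F\<close> by (simp add: face_compatible_def)
  then have face: "c' face_of c" using \<open>c' \<subseteq> c\<close> by (simp add: Int_absorb1)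
  have "C \<subseteq> F" using C by (simp add: is_chain_def)
  then have "affine hull (b ` C) \<subseteq> affine hull c'"
    unfolding c'_def by (intro hull_mono barycentres_subset_Union[OF b])
  moreover have "affine hull c' \<inter> rel_interior c = {}"
  proof (rule ccontr)
    assume "affine hull c' \<inter> rel_interior c \<noteq> {}"
    then have "c \<subseteq> c'"
      using subset_of_face_of_affine_hull[OF face face_compatible_convex[OF F c(1)] order_refl]
      by (auto simp: disjnt_def)
    then have "c = c'" using \<open>c' \<subseteq> c\<close> by blast
    then show False using \<open>c' \<in> C\<close> c(3) by blast
  qed
  ultimately show ?thesis by blast
qed

lemma convex_hull_chain_below_subset:
  fixes F :: "'a::euclidean_space set set"
  assumes F: "face_compatible F" and b: "\<forall>c\<in>F. b c \<in> rel_interior c"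
    and C: "is_chain F C" and c: "c \<in> F" "\<Union>C \<subseteq> c" "c \<notin> C"
  shows "convex hull (b ` C) \<subseteq> c - rel_interior c"
proof -
  have "C \<subseteq> F" using C by (simp add: is_chain_def)
  then have "convex hull (b ` C) \<subseteq> c"
    by (rule convex_hull_barycentres_subset[OF b _ face_compatible_convex[OF F c(1)] c(2)])
  moreover have "convex hull (b ` C) \<inter> rel_interior c = {}"
    using affine_hull_chain_below_disjoint_rel_interior[OF assms] convex_hull_subset_affine_hull
    by blast
  ultimately show ?thesis by blast
qed

lemma barycentre_notin_affine_hull_chain:
  fixes F :: "'a::euclidean_space set set"
  assumes F: "face_compatible F" and b: "\<forall>c\<in>F. b c \<in> rel_interior c"
    and C: "is_chain F C" and ne: "C - {\<Union>C} \<noteq> {}"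
  shows "b (\<Union>C) \<notin> affine hull (b ` (C - {\<Union>C}))"
proof -
  note C' = is_chain_Diff_Union[OF C ne]
  have "\<Union>C \<in> F" using is_chain_memD[OF C Union_in_is_chain[OF C]] .
  then have "affine hull (b ` (C - {\<Union>C})) \<inter> rel_interior (\<Union>C) = {}"
    by (rule affine_hull_chain_below_disjoint_rel_interior[OF F b C'(1) _ C'(3,4)])
  then show ?thesis using b \<open>\<Union>C \<in> F\<close> by blast
qed

lemma affine_independent_chain_barycentres:
  fixes F :: "'a::euclidean_space set set"
  assumes F: "face_compatible F" and b: "\<forall>c\<in>F. b c \<in> rel_interior c" and C: "is_chain F C"
  shows "\<not> affine_dependent (b ` C)"
proof -
  have "finite C" using C by (simp add: is_chain_def)
  then show ?thesis using C
  proof (induction C rule: finite_psubset_induct)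
    case (psubset C)
    show ?case
    proof (cases "C - {\<Union>C} = {}")
      case True
      then have "C = {\<Union>C}" using Union_in_is_chain[OF psubset.prems] by auto
      then show ?thesis by (metis affine_independent_1 image_empty image_insert)
    next
      case False
      note C' = is_chain_Diff_Union[OF psubset.prems False]
      have "\<not> affine_dependent (insert (b (\<Union>C)) (b ` (C - {\<Union>C})))"
        using barycentre_notin_affine_hull_chain[OF F b psubset.prems False]
          psubset.IH[OF C'(2,1)] by (intro affine_independent_insert)
      then show ?thesis by (metis C'(5) image_insert)
    qed
  qed
qed

lemma rel_interior_convex_hull_chainE:
  fixes F :: "'a::euclidean_space set set"
  assumes F: "face_compatible F" and b: "\<forall>c\<in>F. b c \<in> rel_interior c"
    and C: "is_chain F C" and ne: "C - {\<Union>C} \<noteq> {}"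
    and p: "p \<in> rel_interior (convex hull (b ` C))"
  obtains u q where "0 < u" "u < 1" "q \<in> rel_interior (convex hull (b ` (C - {\<Union>C})))"
    "p = u *\<^sub>R b (\<Union>C) + (1 - u) *\<^sub>R q"
proof -
  have "insert (\<Union>C) (C - {\<Union>C}) = C" by (rule is_chain_Diff_Union(5)[OF C ne])
  then have bC: "insert (b (\<Union>C)) (b ` (C - {\<Union>C})) = b ` C" by blast
  have indep: "\<not> affine_dependent (insert (b (\<Union>C)) (b ` (C - {\<Union>C})))"
    unfolding bC by (rule affine_independent_chain_barycentres[OF F b C])
  have "b ` (C - {\<Union>C}) \<subseteq> affine hull (b ` (C - {\<Union>C}))" by (rule hull_subset)
  then have notin: "b (\<Union>C) \<notin> b ` (C - {\<Union>C})"
    using barycentre_notin_affine_hull_chain[OF F b C ne] by blast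
  have nonempty: "b ` (C - {\<Union>C}) \<noteq> {}" using ne by blast
  have "p \<in> rel_interior (convex hull (insert (b (\<Union>C)) (b ` (C - {\<Union>C}))))"
    unfolding bC by (rule p)
  then show thesis by (rule rel_interior_convex_hull_insertE[OF indep notin nonempty]) (rule that)
qed

lemma rel_interior_convex_hull_chain:
  fixes F :: "'a::euclidean_space set set"
  assumes F: "face_compatible F" and b: "\<forall>c\<in>F. b c \<in> rel_interior c"
    and C: "is_chain F C" and p: "p \<in> rel_interior (convex hull (b ` C))"
  shows "p \<in> rel_interior (\<Union>C)"
proof -
  have "\<Union>C \<in> C" by (rule Union_in_is_chain[OF C])
  then have "\<Union>C \<in> F" by (rule is_chain_memD[OF C])
  show ?thesis
  proof (cases "C - {\<Union>C} = {}")
    case True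
    then have "b ` C = {b (\<Union>C)}" using \<open>\<Union>C \<in> C\<close> by blast
    then show ?thesis using p b \<open>\<Union>C \<in> F\<close> by simp
  next
    case False
    note C' = is_chain_Diff_Union[OF C False]
    obtain u q where u: "0 < u" "u < 1"
      and q: "q \<in> rel_interior (convex hull (b ` (C - {\<Union>C})))"
      and p_eq: "p = u *\<^sub>R b (\<Union>C) + (1 - u) *\<^sub>R q"
      by (rule rel_interior_convex_hull_chainE[OF F b C False p])
    have "C - {\<Union>C} \<subseteq> F" using C'(1) by (simp add: is_chain_def)
    then have "convex hull (b ` (C - {\<Union>C})) \<subseteq> \<Union>C"
      by (rule convex_hull_barycentres_subset[OF b _ face_compatible_convex[OF F \<open>\<Union>C \<in> F\<close>] C'(3)])
    then have "q \<in> \<Union>C" using q rel_interior_subset by blast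
    then show ?thesis
      unfolding p_eq using u b \<open>\<Union>C \<in> F\<close>
      by (intro rel_interior_convex_combination[OF face_compatible_convex[OF F \<open>\<Union>C \<in> F\<close>]]) auto
  qed
qed

lemma mem_chain_of_rel_interior:
  fixes K :: "'a::euclidean_space set set"
  assumes conv: "\<forall>c\<in>K. convex c" and b: "\<forall>c\<in>K. b c \<in> rel_interior c"
    and disj: "rel_interiors_disjoint K" and C: "is_chain K C"
    and c: "c \<in> K" "p \<in> rel_interior c" and p: "p \<in> convex hull (b ` C)"
  shows "c \<in> C" "p \<in> convex hull (b ` {d\<in>C. d \<subseteq> c})"
proof -
  obtain c' where c': "c' \<in> C" "p \<in> rel_interior c'" "p \<in> convex hull (b ` {d\<in>C. d \<subseteq> c'})"
    by (rule convex_hull_chain_carrier[OF conv b C p])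
  have "c' = c" using rel_interiors_disjointD[OF disj is_chain_memD[OF C c'(1)] c(1) c'(2) c(2)] .
  then show "c \<in> C" "p \<in> convex hull (b ` {d\<in>C. d \<subseteq> c})" using c' by simp_all
qed

lemma convex_hull_chain_peel:
  fixes F :: "'a::euclidean_space set set"
  assumes F: "face_compatible F" and b: "\<forall>c\<in>F. b c \<in> rel_interior c"
    and C: "is_chain F C" "c \<in> C" "\<Union>C \<subseteq> c" and q: "q \<in> c - rel_interior c"
    and u: "0 < u" "u < 1" "u *\<^sub>R b c + (1 - u) *\<^sub>R q \<in> convex hull (b ` C)"
  shows "q \<in> convex hull (b ` (C - {c}))"
proof -
  have "c \<in> F" by (rule is_chain_memD[OF C(1,2)])
  then have conv_c: "convex c" and bc: "b c \<in> rel_interior c"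
    using F b by (simp_all add: face_compatible_def)
  have below: "convex hull (b ` (C - {c})) \<subseteq> c - rel_interior c"
  proof (cases "C - {c} = {}")
    case False
    then have "is_chain F (C - {c})" by (intro is_chain_subset[OF C(1)]) auto
    moreover have "\<Union>(C - {c}) \<subseteq> c" "c \<notin> C - {c}" using C(3) by auto
    ultimately show ?thesis by (rule convex_hull_chain_below_subset[OF F b _ \<open>c \<in> F\<close>])
  next
    case True
    then have "convex hull (b ` (C - {c})) = {}" by (simp only: image_empty convex_hull_empty)
    then show ?thesis by (simp only: empty_subsetI)
  qed
  have "insert (b c) (b ` (C - {c})) = b ` C" using C(2) by blast
  then have "u *\<^sub>R b c + (1 - u) *\<^sub>R q \<in> convex hull (insert (b c) (b ` (C - {c})))"
    using u(3) by (simp only:)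
  then have "u *\<^sub>R b c + (1 - u) *\<^sub>R q \<in> convex hull (insert (b c) (convex hull (b ` (C - {c}))))"
    using hull_mono[OF insert_mono[OF hull_subset[of "b ` (C - {c})" convex]]] by blast
  then show ?thesis
    by (rule convex_hull_insert_cancel[OF conv_c bc q convex_convex_hull below u(1,2)])
qed

lemma chain_subset_of_rel_interior_convex_hull:
  fixes F :: "'a::euclidean_space set set"
  assumes F: "face_compatible F" and b: "\<forall>c\<in>F. b c \<in> rel_interior c"
    and C1: "is_chain F C1" and C2: "is_chain F C2"
    and p1: "p \<in> rel_interior (convex hull (b ` C1))" and p2: "p \<in> convex hull (b ` C2)"
  shows "C1 \<subseteq> C2"
proof -
  have conv: "\<forall>c\<in>F. convex c" using F by (simp add: face_compatible_def)
  have "finite C1" using C1 by (simp add: is_chain_def)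
  then show ?thesis using C1 p1 p2
  proof (induction C1 arbitrary: p rule: finite_psubset_induct)
    case (psubset C1)
    define c where "c = \<Union>C1"
    have "c \<in> C1" unfolding c_def by (rule Union_in_is_chain[OF psubset.prems(1)])
    then have "c \<in> F" by (rule is_chain_memD[OF psubset.prems(1)])
    have "p \<in> rel_interior c"
      unfolding c_def by (rule rel_interior_convex_hull_chain[OF F b psubset.prems(1,2)])
    note c_C2 = mem_chain_of_rel_interior[OF conv b face_compatible_rel_interiors_disjoint[OF F]
        C2 \<open>c \<in> F\<close> this psubset.prems(3)]
    show ?case
    proof (cases "C1 - {c} = {}")
      case True
      then show ?thesis using \<open>c \<in> C1\<close> c_C2(1) by blast
    next
      case False
      note C1' = is_chain_Diff_Union[OF psubset.prems(1) False[unfolded c_def], folded c_def]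
      obtain u q where u: "0 < u" "u < 1" and q: "q \<in> rel_interior (convex hull (b ` (C1 - {c})))"
        and p_eq: "p = u *\<^sub>R b c + (1 - u) *\<^sub>R q"
        using rel_interior_convex_hull_chainE[OF F b psubset.prems(1) False[unfolded c_def]
            psubset.prems(2)]
        unfolding c_def by blast
      have "q \<in> c - rel_interior c"
        using convex_hull_chain_below_subset[OF F b C1'(1) \<open>c \<in> F\<close> C1'(3,4)] q
          rel_interior_subset by blast
      moreover have "is_chain F {d\<in>C2. d \<subseteq> c}" using c_C2(1)
        by (intro is_chain_subset[OF C2]) auto
      ultimately have "q \<in> convex hull (b ` ({d\<in>C2. d \<subseteq> c} - {c}))"
        using convex_hull_chain_peel[OF F b _ _ _ _ u] c_C2 p_eq by auto
      moreover have "convex hull (b ` ({d\<in>C2. d \<subseteq> c} - {c})) \<subseteq> convex hull (b ` C2)"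
        by (intro hull_mono image_mono) auto
      ultimately have "C1 - {c} \<subseteq> C2"
        using psubset.IH[OF C1'(2,1) q] by blast
      then show ?thesis using c_C2(1) by blast
    qed
  qed
qed

lemma chain_subset_of_convex_hull_subset:
  fixes F :: "'a::euclidean_space set set"
  assumes F: "face_compatible F" and b: "\<forall>c\<in>F. b c \<in> rel_interior c"
    and E: "is_chain F E" and P: "is_chain F P"
    and sub: "convex hull (b ` E) \<subseteq> convex hull (b ` P)"
  shows "E \<subseteq> P"
proof
  fix e assume "e \<in> E"
  then have "e \<in> F" "b e \<in> convex hull (b ` P)"
    using is_chain_memD[OF E] sub hull_subset[of "b ` E" convex] by auto
  moreover have "\<forall>c\<in>F. convex c" using F by (simp add: face_compatible_def)
  ultimately show "e \<in> P"
    using mem_chain_of_rel_interior(1)[OF _ b face_compatible_rel_interiors_disjoint[OF F] P]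
      b by blast
qed

lemma extreme_point_of_convex_hull_chain:
  fixes K :: "'a::euclidean_space set set"
  assumes conv: "\<forall>c\<in>K. convex c" and b: "\<forall>c\<in>K. b c \<in> rel_interior c"
    and disj: "rel_interiors_disjoint K" and D: "is_chain K D" and "\<tau> \<in> D"
  shows "b \<tau> extreme_point_of convex hull (b ` D)"
proof -
  have "b \<tau> \<notin> convex hull (b ` (D - {\<tau>}))"
  proof
    assume in_hull: "b \<tau> \<in> convex hull (b ` (D - {\<tau>}))"
    then have "D - {\<tau>} \<noteq> {}" by (metis convex_hull_empty empty_iff image_empty)
    then have "is_chain K (D - {\<tau>})" by (intro is_chain_subset[OF D]) auto
    moreover have "\<tau> \<in> K" by (rule is_chain_memD[OF D \<open>\<tau> \<in> D\<close>])
    moreover have "b \<tau> \<in> rel_interior \<tau>" using b \<open>\<tau> \<in> K\<close> by blast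
    ultimately have "\<tau> \<in> D - {\<tau>}"
      using mem_chain_of_rel_interior(1)[OF conv b disj _ _ _ in_hull] by blast
    then show False by blast
  qed
  moreover have "finite (b ` (D - {\<tau>}))" using D by (simp add: is_chain_def)
  moreover have "insert (b \<tau>) (b ` (D - {\<tau>})) = b ` D" using \<open>\<tau> \<in> D\<close> by blast
  ultimately show ?thesis using extreme_point_of_convex_hull_insert by metis
qed

lemma convex_hull_chain_subset_iff:
  fixes G :: "'a::euclidean_space set set"
  assumes G: "face_compatible G" "F \<subseteq> G" and b: "\<forall>c\<in>F. b c \<in> rel_interior c"
    and E: "is_chain F E" and "\<alpha> \<in> G"
  shows "convex hull (b ` E) \<subseteq> \<alpha> \<longleftrightarrow> \<Union>E \<subseteq> \<alpha>"
proof
  assume hull_sub: "convex hull (b ` E) \<subseteq> \<alpha>"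
  show "\<Union>E \<subseteq> \<alpha>"
  proof (rule Union_least)
    fix e assume "e \<in> E"
    then have "e \<in> G" "b e \<in> rel_interior e" using is_chain_memD[OF E] G(2) b by auto
    moreover have "b e \<in> \<alpha>" using hull_sub hull_subset[of "b ` E" convex] \<open>e \<in> E\<close> by blast
    ultimately show "e \<subseteq> \<alpha>"
      using face_compatible_subset_of_rel_interior[OF G(1) _ \<open>\<alpha> \<in> G\<close> order_refl] by blast
  qed
next
  assume "\<Union>E \<subseteq> \<alpha>"
  moreover have "E \<subseteq> F" using E by (simp add: is_chain_def)
  ultimately show "convex hull (b ` E) \<subseteq> \<alpha>"
    using convex_hull_barycentres_subset[OF b _ face_compatible_convex[OF G(1) \<open>\<alpha> \<in> G\<close>]] by blast
qed

lemma bary_sd_rel_interiors_disjoint: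
  assumes F: "face_compatible F" and b: "valid_bary b F"
  shows "rel_interiors_disjoint (bary_sd b F)"
  unfolding rel_interiors_disjoint_def pairwise_def disjnt_def
proof (intro ballI impI)
  fix R S assume "R \<in> bary_sd b F" "S \<in> bary_sd b F" "R \<noteq> S"
  then obtain C1 C2 where C: "is_chain F C1" "R = convex hull (b ` C1)"
    "is_chain F C2" "S = convex hull (b ` C2)"
    by (auto simp: bary_sd_def)
  have b': "\<forall>c\<in>F. b c \<in> rel_interior c" using b by (simp add: valid_bary_def)
  show "rel_interior R \<inter> rel_interior S = {}"
  proof (rule ccontr)
    assume "rel_interior R \<inter> rel_interior S \<noteq> {}"
    then obtain x where x: "x \<in> rel_interior R" "x \<in> rel_interior S" by blast
    then have "x \<in> R" "x \<in> S" using rel_interior_subset by blast+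
    then have "C1 \<subseteq> C2" "C2 \<subseteq> C1"
      using chain_subset_of_rel_interior_convex_hull[OF F b' C(1) C(3)]
        chain_subset_of_rel_interior_convex_hull[OF F b' C(3) C(1)] x C(2,4)
      by simp_all
    then show False using C(2,4) \<open>R \<noteq> S\<close> by simp
  qed
qed

lemma bary_sd_subset_of_rel_interior:
  assumes G: "face_compatible G" "F \<subseteq> G" and b: "valid_bary b F"
    and "\<tau> \<in> bary_sd b F" "x \<in> rel_interior \<tau>" "x \<in> \<alpha>" "\<alpha> \<in> G"
  shows "\<tau> \<subseteq> \<alpha>"
proof -
  obtain E where E: "is_chain F E" "\<tau> = convex hull (b ` E)"
    using \<open>\<tau> \<in> bary_sd b F\<close> by (auto simp: bary_sd_def)
  have "\<Union>E \<in> G" using Union_in_is_chain[OF E(1)] is_chain_memD[OF E(1)] G(2) by blast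
  have "\<tau> \<subseteq> \<Union>E"
    using convex_hull_chain_subset_iff[OF G _ E(1) \<open>\<Union>E \<in> G\<close>] b E(2)
    by (simp add: valid_bary_def)
  then show ?thesis
    by (rule face_compatible_subset_of_rel_interior[OF G(1) \<open>\<Union>E \<in> G\<close> \<open>\<alpha> \<in> G\<close> _ assms(5,6)])
qed

lemma bary_sd_subsets_of_common_simplex:
  assumes G: "face_compatible G" "F \<subseteq> G" and b: "valid_bary b F"
    and simplices: "\<tau>1 \<in> bary_sd b F" "\<tau>2 \<in> bary_sd b F" "\<rho> \<in> bary_sd b F"
    and "\<tau>1 \<subseteq> \<rho>" "\<tau>2 \<subseteq> \<rho>"
    and "\<alpha>1 \<in> G" "\<alpha>2 \<in> G" "\<tau>1 \<subseteq> \<alpha>1" "\<tau>2 \<subseteq> \<alpha>2"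
  shows "\<tau>1 \<subseteq> \<alpha>2 \<or> \<tau>2 \<subseteq> \<alpha>1"
proof -
  have b': "\<forall>c\<in>F. b c \<in> rel_interior c" using b by (simp add: valid_bary_def)
  have F: "face_compatible F" by (rule face_compatible_subfamily[OF G])
  obtain E1 E2 P where E: "is_chain F E1" "\<tau>1 = convex hull (b ` E1)"
    "is_chain F E2" "\<tau>2 = convex hull (b ` E2)" and P: "is_chain F P" "\<rho> = convex hull (b ` P)"
    using simplices by (auto simp: bary_sd_def)
  have "E1 \<subseteq> P" "E2 \<subseteq> P"
    using chain_subset_of_convex_hull_subset[OF F b' E(1) P(1)]
      chain_subset_of_convex_hull_subset[OF F b' E(3) P(1)] E(2,4) P(2) \<open>\<tau>1 \<subseteq> \<rho>\<close> \<open>\<tau>2 \<subseteq> \<rho>\<close>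
    by simp_all
  then have "\<Union>E1 \<in> P" "\<Union>E2 \<in> P" using Union_in_is_chain[OF E(1)] Union_in_is_chain[OF E(3)] by blast+
  then have "\<Union>E1 \<subseteq> \<Union>E2 \<or> \<Union>E2 \<subseteq> \<Union>E1" by (rule is_chain_comparable[OF P(1)])
  moreover have iff1: "\<tau>1 \<subseteq> \<alpha> \<longleftrightarrow> \<Union>E1 \<subseteq> \<alpha>" and iff2: "\<tau>2 \<subseteq> \<alpha> \<longleftrightarrow> \<Union>E2 \<subseteq> \<alpha>"
    if "\<alpha> \<in> G" for \<alpha>
    using convex_hull_chain_subset_iff[OF G b' E(1) that] convex_hull_chain_subset_iff[OF G b' E(3) that]
      E(2,4) by simp_all
  moreover have "\<Union>E1 \<subseteq> \<alpha>1" "\<Union>E2 \<subseteq> \<alpha>2"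
    using iff1[OF \<open>\<alpha>1 \<in> G\<close>] iff2[OF \<open>\<alpha>2 \<in> G\<close>] \<open>\<tau>1 \<subseteq> \<alpha>1\<close> \<open>\<tau>2 \<subseteq> \<alpha>2\<close> by simp_all
  ultimately have "\<Union>E1 \<subseteq> \<alpha>2 \<or> \<Union>E2 \<subseteq> \<alpha>1" by blast
  then show ?thesis using iff1[OF \<open>\<alpha>2 \<in> G\<close>] iff2[OF \<open>\<alpha>1 \<in> G\<close>] by blast
qed

lemma bary_sd_comparable_subset_Int:
  assumes G: "face_compatible G" "F \<subseteq> G" and b: "valid_bary b F"
    and simplices: "\<tau>1 \<in> bary_sd b F" "\<tau>2 \<in> bary_sd b F" "\<rho> \<in> bary_sd b F"
    and comparable: "\<tau>1 \<subseteq> \<rho> \<or> \<rho> \<subseteq> \<tau>1" "\<tau>2 \<subseteq> \<rho> \<or> \<rho> \<subseteq> \<tau>2"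
    and \<alpha>: "\<alpha>1 \<in> G" "\<alpha>2 \<in> G" "\<tau>1 \<subseteq> \<alpha>1" "\<tau>2 \<subseteq> \<alpha>2"
  shows "\<rho> \<subseteq> \<alpha>1 \<inter> \<alpha>2 \<or> \<tau>1 \<subseteq> \<alpha>1 \<inter> \<alpha>2 \<or> \<tau>2 \<subseteq> \<alpha>1 \<inter> \<alpha>2"
proof (cases "\<tau>1 \<subseteq> \<rho> \<and> \<tau>2 \<subseteq> \<rho>")
  case True
  then have "\<tau>1 \<subseteq> \<alpha>2 \<or> \<tau>2 \<subseteq> \<alpha>1"
    using bary_sd_subsets_of_common_simplex[OF G b simplices _ _ \<alpha>] by blast
  then show ?thesis using \<alpha>(3,4) by blast
next
  case False
  then show ?thesis using comparable \<alpha>(3,4) by blast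
qed

section \<open>Derived neighbourhoods in the second barycentric subdivision\<close>

lemma sd_nbhd_mono: "X \<subseteq> Y \<Longrightarrow> sd_nbhd X K \<subseteq> sd_nbhd Y K"
  unfolding sd_nbhd_def sub_vertices_def by blast

lemma mem_sd_nbhd_bary_sdI:
  assumes F: "face_compatible F" and b1: "valid_bary b1 F" and b2: "valid_bary b2 (bary_sd b1 F)"
    and D: "is_chain (bary_sd b1 F) D" "\<tau> \<in> D" "\<tau> \<subseteq> X" and x: "x \<in> convex hull (b2 ` D)"
  shows "x \<in> sd_nbhd X (bary_sd b2 (bary_sd b1 F))"
proof -
  let ?K = "bary_sd b1 F"
  have "\<tau> \<in> ?K" using is_chain_memD[OF D(1,2)] .
  then have "b2 \<tau> \<in> \<tau>" using b2 rel_interior_subset by (auto simp: valid_bary_def)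
  have "is_chain ?K {\<tau>}" using \<open>\<tau> \<in> ?K\<close> by (simp add: is_chain_def)
  moreover have "{b2 \<tau>} = convex hull (b2 ` {\<tau>})" by simp
  ultimately have "{b2 \<tau>} \<in> bary_sd b2 ?K" unfolding bary_sd_def by blast
  moreover have "b2 \<tau> extreme_point_of {b2 \<tau>}" by (simp add: extreme_point_of_def)
  ultimately have vertex: "b2 \<tau> \<in> sub_vertices X (bary_sd b2 ?K)"
    using \<open>b2 \<tau> \<in> \<tau>\<close> D(3) unfolding sub_vertices_def by blast
  have "convex hull (b2 ` D) \<in> bary_sd b2 ?K" using D(1) by (auto simp: bary_sd_def)
  moreover have "b2 \<tau> extreme_point_of convex hull (b2 ` D)"
  proof (rule extreme_point_of_convex_hull_chain[OF _ _ _ D(1,2)])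
    show "\<forall>c\<in>?K. convex c" by (auto simp: bary_sd_def)
    show "\<forall>c\<in>?K. b2 c \<in> rel_interior c" using b2 by (simp add: valid_bary_def)
    show "rel_interiors_disjoint ?K" by (rule bary_sd_rel_interiors_disjoint[OF F b1])
  qed
  ultimately have "x \<in> cstar (b2 \<tau>) (bary_sd b2 ?K)"
    using x unfolding cstar_def by blast
  then show ?thesis using vertex unfolding sd_nbhd_def by blast
qed

lemma mem_sd_nbhd_bary_sdE:
  assumes G: "face_compatible G" "F \<subseteq> G" and b1: "valid_bary b1 F"
    and b2: "valid_bary b2 (bary_sd b1 F)" and "\<alpha> \<in> G"
    and x: "x \<in> sd_nbhd \<alpha> (bary_sd b2 (bary_sd b1 F))"
  obtains D \<tau> where "is_chain (bary_sd b1 F) D" "\<tau> \<in> D" "\<tau> \<subseteq> \<alpha>" "x \<in> convex hull (b2 ` D)"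
proof -
  let ?K = "bary_sd b1 F"
  obtain v S D where v: "v \<in> sub_vertices \<alpha> (bary_sd b2 ?K)" "v extreme_point_of S" "x \<in> S"
    and D: "is_chain ?K D" "S = convex hull (b2 ` D)"
    using x unfolding sd_nbhd_def cstar_def bary_sd_def[of b2] by blast
  have "v \<in> \<alpha>" using v(1) unfolding sub_vertices_def extreme_point_of_def by blast
  obtain \<tau> where "\<tau> \<in> D" "v = b2 \<tau>" using extreme_point_of_convex_hull v(2) D(2) by blast
  moreover have "\<tau> \<in> ?K" using is_chain_memD[OF D(1) \<open>\<tau> \<in> D\<close>] .
  ultimately have "\<tau> \<subseteq> \<alpha>"
    using bary_sd_subset_of_rel_interior[OF G b1 _ _ \<open>v \<in> \<alpha>\<close> \<open>\<alpha> \<in> G\<close>] b2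
    by (auto simp: valid_bary_def)
  then show thesis using that D \<open>\<tau> \<in> D\<close> v(3) by blast
qed

lemma mem_sd_nbhd_bary_sd_Int:
  assumes G: "face_compatible G" "F \<subseteq> G" and b1: "valid_bary b1 F"
    and b2: "valid_bary b2 (bary_sd b1 F)" and \<alpha>: "\<alpha>1 \<in> G" "\<alpha>2 \<in> G"
    and x: "x \<in> sd_nbhd \<alpha>1 (bary_sd b2 (bary_sd b1 F))" "x \<in> sd_nbhd \<alpha>2 (bary_sd b2 (bary_sd b1 F))"
  shows "x \<in> sd_nbhd (\<alpha>1 \<inter> \<alpha>2) (bary_sd b2 (bary_sd b1 F))"
proof -
  let ?K = "bary_sd b1 F"
  have F: "face_compatible F" by (rule face_compatible_subfamily[OF G])
  have b2': "\<forall>c\<in>?K. b2 c \<in> rel_interior c" using b2 by (simp add: valid_bary_def)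
  have conv: "\<forall>c\<in>?K. convex c" by (auto simp: bary_sd_def)
  obtain D1 \<tau>1 where D1: "is_chain ?K D1" "\<tau>1 \<in> D1" "\<tau>1 \<subseteq> \<alpha>1" "x \<in> convex hull (b2 ` D1)"
    by (rule mem_sd_nbhd_bary_sdE[OF G b1 b2 \<alpha>(1) x(1)])
  obtain D2 \<tau>2 where D2: "is_chain ?K D2" "\<tau>2 \<in> D2" "\<tau>2 \<subseteq> \<alpha>2" "x \<in> convex hull (b2 ` D2)"
    by (rule mem_sd_nbhd_bary_sdE[OF G b1 b2 \<alpha>(2) x(2)])
  obtain \<rho> where \<rho>: "\<rho> \<in> D1" "x \<in> rel_interior \<rho>" "x \<in> convex hull (b2 ` {d\<in>D1. d \<subseteq> \<rho>})"
    by (rule convex_hull_chain_carrier[OF conv b2' D1(1,4)])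
  have "\<rho> \<in> ?K" "\<tau>1 \<in> ?K" "\<tau>2 \<in> ?K" using is_chain_memD D1(1,2) D2(1,2) \<rho>(1) by blast+
  have "\<rho> \<in> D2"
    by (rule mem_chain_of_rel_interior(1)[OF conv b2' bary_sd_rel_interiors_disjoint[OF F b1]
          D2(1) \<open>\<rho> \<in> ?K\<close> \<rho>(2) D2(4)])
  have "\<rho> \<subseteq> \<alpha>1 \<inter> \<alpha>2 \<or> \<tau>1 \<subseteq> \<alpha>1 \<inter> \<alpha>2 \<or> \<tau>2 \<subseteq> \<alpha>1 \<inter> \<alpha>2"
    using bary_sd_comparable_subset_Int[OF G b1 \<open>\<tau>1 \<in> ?K\<close> \<open>\<tau>2 \<in> ?K\<close> \<open>\<rho> \<in> ?K\<close>
        is_chain_comparable[OF D1(1,2) \<rho>(1)] is_chain_comparable[OF D2(1,2) \<open>\<rho> \<in> D2\<close>]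
        \<alpha> D1(3) D2(3)] .
  then show ?thesis
  proof (elim disjE)
    assume "\<rho> \<subseteq> \<alpha>1 \<inter> \<alpha>2"
    moreover have "is_chain ?K {d\<in>D1. d \<subseteq> \<rho>}"
      by (rule is_chain_subset[OF D1(1)]) (use \<rho>(1) in auto)
    ultimately show ?thesis using mem_sd_nbhd_bary_sdI[OF F b1 b2 _ _ _ \<rho>(3)] \<rho>(1) by blast
  next
    assume "\<tau>1 \<subseteq> \<alpha>1 \<inter> \<alpha>2"
    then show ?thesis by (rule mem_sd_nbhd_bary_sdI[OF F b1 b2 D1(1,2) _ D1(4)])
  next
    assume "\<tau>2 \<subseteq> \<alpha>1 \<inter> \<alpha>2"
    then show ?thesis by (rule mem_sd_nbhd_bary_sdI[OF F b1 b2 D2(1,2) _ D2(4)])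
  qed
qed

lemma sd_nbhd_bary_sd_Int:
  assumes "face_compatible G" "F \<subseteq> G" "valid_bary b1 F" "valid_bary b2 (bary_sd b1 F)"
    and "\<alpha>1 \<in> G" "\<alpha>2 \<in> G"
  shows "sd_nbhd \<alpha>1 (bary_sd b2 (bary_sd b1 F)) \<inter> sd_nbhd \<alpha>2 (bary_sd b2 (bary_sd b1 F)) =
    sd_nbhd (\<alpha>1 \<inter> \<alpha>2) (bary_sd b2 (bary_sd b1 F))"
  using mem_sd_nbhd_bary_sd_Int[OF assms] sd_nbhd_mono[of "\<alpha>1 \<inter> \<alpha>2"] by blast

section \<open>Cells of the well-rounded retract\<close>

definition outer :: "vec4 \<Rightarrow> mat4" where
  "outer x = (\<chi> i j. x $ i * x $ j)"

lemma qf_eq_inner_outer: "qf A x = outer x \<bullet> A"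
  by (simp add: qf_def outer_def inner_vec_def matrix_vector_mult_def sum_distrib_left mult_ac)

lemma qf_add_scaleR: "qf (u *\<^sub>R A + v *\<^sub>R B) x = u * qf A x + v * qf B x"
  by (simp add: qf_eq_inner_outer inner_add_right)

lemma transpose_add: "transpose (A + B) = transpose A + transpose (B :: 'a::semiring_1^'n^'m)"
  by (simp add: transpose_def vec_eq_iff)

lemma WR_qf_pos: "A \<in> WR \<Longrightarrow> x \<noteq> 0 \<Longrightarrow> 0 < qf A x"
  by (simp add: WR_def pos_def_sym_def)

lemma WR_qf_ge_1:
  assumes "A \<in> WR" "int_vec x" "x \<noteq> 0"
  shows "1 \<le> qf A x"
proof -
  have "bdd_below {qf A x | x. int_vec x \<and> x \<noteq> 0}"
    using WR_qf_pos[OF assms(1)] by (intro bdd_belowI[where m = 0]) (auto simp: less_imp_le)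
  then have "arith_min A \<le> qf A x"
    unfolding arith_min_def using assms(2,3) by (intro cInf_lower) auto
  then show ?thesis using assms(1) by (simp add: WR_def)
qed

lemma WR_min_vecs: "A \<in> WR \<Longrightarrow> min_vecs A = {x. int_vec x \<and> x \<noteq> 0 \<and> qf A x = 1}"
  by (simp add: WR_def min_vecs_def)

lemma WR_min_vecs_nonempty:
  assumes "A \<in> WR" shows "min_vecs A \<noteq> {}"
proof
  assume "min_vecs A = {}"
  then have "(UNIV :: vec4 set) = {0}" using assms by (simp add: WR_def)
  moreover have "axis 1 1 \<noteq> (0 :: vec4)" by (simp add: axis_eq_0_iff)
  ultimately show False by blast
qed

definition wr_polyhedron :: "vec4 set \<Rightarrow> mat4 set" where
  "wr_polyhedron M = {A. transpose A = A \<and> (\<forall>x. 0 \<le> qf A x) \<and>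
     (\<forall>x. int_vec x \<and> x \<noteq> 0 \<longrightarrow> 1 \<le> qf A x) \<and> (\<forall>x\<in>M. qf A x = 1)}"

lemma WR_in_wr_polyhedron:
  assumes "A \<in> WR" shows "A \<in> wr_polyhedron (min_vecs A)"
proof -
  have "0 \<le> qf A x" for x
    using WR_qf_pos[OF assms, of x] by (cases "x = 0") (auto simp: qf_def)
  then show ?thesis
    using assms WR_qf_ge_1[OF assms] WR_min_vecs[OF assms]
    by (simp add: wr_polyhedron_def WR_def pos_def_sym_def)
qed

lemma closed_wr_polyhedron: "closed (wr_polyhedron M)"
proof -
  have "wr_polyhedron M =
      (\<Inter>i. \<Inter>j. {A. (axis i (axis j 1) - axis j (axis i 1)) \<bullet> A = 0}) \<inter>
      (\<Inter>x. {A. outer x \<bullet> A \<ge> 0}) \<inter>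
      (\<Inter>x\<in>{x. int_vec x \<and> x \<noteq> 0}. {A. outer x \<bullet> A \<ge> 1}) \<inter>
      (\<Inter>x\<in>M. {A. outer x \<bullet> A = 1})"
    by (auto simp: wr_polyhedron_def qf_eq_inner_outer[symmetric] inner_diff_left inner_axis'
        transpose_def vec_eq_iff)
  then show ?thesis
    by (simp only:) (intro closed_Int closed_INT ballI allI closed_hyperplane closed_halfspace_ge)
qed

lemma convex_wr_polyhedron: "convex (wr_polyhedron M)"
  unfolding convex_def
proof (intro ballI allI impI)
  fix A B and u v :: real
  assume A: "A \<in> wr_polyhedron M" and B: "B \<in> wr_polyhedron M"
    and uv: "0 \<le> u" "0 \<le> v" "u + v = 1"
  have "1 \<le> u * qf A x + v * qf B x" if "int_vec x" "x \<noteq> 0" for x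
  proof -
    have "1 \<le> qf A x" "1 \<le> qf B x" using A B that by (auto simp: wr_polyhedron_def)
    then have "u * 1 \<le> u * qf A x" "v * 1 \<le> v * qf B x"
      using uv by (simp_all only: mult_left_mono)
    then show ?thesis using uv by linarith
  qed
  then show "u *\<^sub>R A + v *\<^sub>R B \<in> wr_polyhedron M"
    using A B uv by (simp add: wr_polyhedron_def qf_add_scaleR transpose_add transpose_scalar)
qed

lemma arith_min_eq_1:
  assumes "\<And>x. int_vec x \<Longrightarrow> x \<noteq> 0 \<Longrightarrow> 1 \<le> qf A x"
    and "int_vec x0" "x0 \<noteq> 0" "qf A x0 = 1"
  shows "arith_min A = 1"
  unfolding arith_min_def
proof (rule cInf_eq_minimum)
  show "1 \<in> {qf A x |x. int_vec x \<and> x \<noteq> 0}" using assms(2-4) by auto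
qed (use assms(1) in auto)

lemma WR_segment_qf:
  assumes A0: "A0 \<in> WR" and A: "A \<in> wr_polyhedron (min_vecs A0)" and t: "0 \<le> t" "t < 1"
    and x: "int_vec x" "x \<noteq> 0"
  shows "1 \<le> qf ((1 - t) *\<^sub>R A0 + t *\<^sub>R A) x"
    and "qf ((1 - t) *\<^sub>R A0 + t *\<^sub>R A) x = 1 \<longleftrightarrow> qf A0 x = 1"
proof -
  have qf_B: "qf ((1 - t) *\<^sub>R A0 + t *\<^sub>R A) x = (1 - t) * qf A0 x + t * qf A x"
    by (simp add: qf_add_scaleR)
  have ge: "1 \<le> qf A0 x" "1 \<le> qf A x"
    using WR_qf_ge_1[OF A0 x] A x by (auto simp: wr_polyhedron_def)
  have A0_le: "1 - t \<le> (1 - t) * qf A0 x" using mult_left_mono[OF ge(1), of "1 - t"] t by simp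
  have A_le: "t \<le> t * qf A x" using mult_left_mono[OF ge(2) t(1)] by simp
  then show "1 \<le> qf ((1 - t) *\<^sub>R A0 + t *\<^sub>R A) x" using A0_le unfolding qf_B by linarith
  show "qf ((1 - t) *\<^sub>R A0 + t *\<^sub>R A) x = 1 \<longleftrightarrow> qf A0 x = 1"
  proof
    assume "qf A0 x = 1"
    then have "qf A x = 1"
      using A x WR_min_vecs[OF A0] by (auto simp: wr_polyhedron_def)
    then show "qf ((1 - t) *\<^sub>R A0 + t *\<^sub>R A) x = 1"
      unfolding qf_B using \<open>qf A0 x = 1\<close> by simp
  next
    assume B_x: "qf ((1 - t) *\<^sub>R A0 + t *\<^sub>R A) x = 1"
    show "qf A0 x = 1"
    proof (rule ccontr)
      assume "qf A0 x \<noteq> 1"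
      then have "1 - t < (1 - t) * qf A0 x"
        using mult_strict_left_mono[of 1 "qf A0 x" "1 - t"] ge t by simp
      then show False using A_le B_x unfolding qf_B by linarith
    qed
  qed
qed

lemma WR_segment_same_min_vecs:
  assumes A0: "A0 \<in> WR" and A: "A \<in> wr_polyhedron (min_vecs A0)" and t: "0 \<le> t" "t < 1"
  defines "B \<equiv> (1 - t) *\<^sub>R A0 + t *\<^sub>R A"
  shows "B \<in> WR \<and> min_vecs B = min_vecs A0"
proof -
  have sym: "transpose B = B"
    using A A0 by (simp add: B_def wr_polyhedron_def WR_def pos_def_sym_def transpose_add transpose_scalar)
  have pos: "0 < qf B x" if "x \<noteq> 0" for x
  proof -
    have "0 \<le> qf A x" using A by (simp add: wr_polyhedron_def)
    then show ?thesis using WR_qf_pos[OF A0 that] t by (simp add: B_def qf_add_scaleR add_pos_nonneg)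
  qed
  note B_qf = WR_segment_qf[OF A0 A t, folded B_def]
  obtain x0 where "x0 \<in> min_vecs A0" using WR_min_vecs_nonempty[OF A0] by blast
  then have x0: "int_vec x0" "x0 \<noteq> 0" "qf A0 x0 = 1" using WR_min_vecs[OF A0] by auto
  have "arith_min B = 1"
    by (rule arith_min_eq_1[OF B_qf(1) x0(1,2)]) (use B_qf(2)[OF x0(1,2)] x0(3) in auto)
  then have "min_vecs B = min_vecs A0"
    using B_qf(2) A0 by (auto simp: min_vecs_def WR_def)
  moreover have "span (min_vecs A0) = UNIV" using A0 by (simp add: WR_def)
  ultimately show ?thesis
    using sym pos \<open>arith_min B = 1\<close> by (simp add: WR_def pos_def_sym_def)
qed

lemma wr_cell_eq_wr_polyhedron:
  assumes A0: "A0 \<in> WR"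
  shows "wr_cell (min_vecs A0) = wr_polyhedron (min_vecs A0)"
proof
  have "{A \<in> WR. min_vecs A = min_vecs A0} \<subseteq> wr_polyhedron (min_vecs A0)"
    using WR_in_wr_polyhedron by (metis (mono_tags, lifting) mem_Collect_eq subsetI)
  then show "wr_cell (min_vecs A0) \<subseteq> wr_polyhedron (min_vecs A0)"
    unfolding wr_cell_def by (rule closure_minimal[OF _ closed_wr_polyhedron])
next
  show "wr_polyhedron (min_vecs A0) \<subseteq> wr_cell (min_vecs A0)"
  proof
    fix A assume A: "A \<in> wr_polyhedron (min_vecs A0)"
    let ?O = "{B \<in> WR. min_vecs B = min_vecs A0}"
    show "A \<in> wr_cell (min_vecs A0)"
    proof (cases "A = A0")
      case True
      then have "A \<in> ?O" using A0 by simp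
      then show ?thesis unfolding wr_cell_def by (rule closure_subset[THEN subsetD])
    next
      case False
      have "open_segment A0 A \<subseteq> ?O"
      proof
        fix B assume "B \<in> open_segment A0 A"
        then obtain u where "0 < u" "u < 1" "B = (1 - u) *\<^sub>R A0 + u *\<^sub>R A"
          unfolding in_segment by blast
        then show "B \<in> ?O" using WR_segment_same_min_vecs[OF A0 A, of u] by simp
      qed
      then have "closure (open_segment A0 A) \<subseteq> wr_cell (min_vecs A0)"
        unfolding wr_cell_def by (rule closure_mono)
      moreover have "A \<in> closure (open_segment A0 A)" using False by simp
      ultimately show ?thesis by blast
    qed
  qed
qed

lemma face_compatible_WR_cells: "face_compatible WR_cells"
  unfolding face_compatible_def
proof (intro conjI ballI)
  fix c d assume "c \<in> WR_cells" "d \<in> WR_cells"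
  then obtain A0 A1 where A: "A0 \<in> WR" "c = wr_polyhedron (min_vecs A0)"
    "A1 \<in> WR" "d = wr_polyhedron (min_vecs A1)"
    by (auto simp: WR_cells_def wr_cell_eq_wr_polyhedron)
  define H where "H x = c \<inter> {A. outer x \<bullet> A = 1}" for x
  have "c \<inter> d = \<Inter>(H ` min_vecs A1)"
    using A WR_min_vecs_nonempty[OF A(3)]
    by (auto simp: H_def wr_polyhedron_def qf_eq_inner_outer)
  moreover have "H x face_of c" if "x \<in> min_vecs A1" for x
    unfolding H_def
  proof (rule face_of_Int_supporting_hyperplane_ge)
    show "convex c" using A(2) convex_wr_polyhedron by simp
    show "\<And>B. B \<in> c \<Longrightarrow> 1 \<le> outer x \<bullet> B"
      using that A(2) WR_min_vecs[OF A(3)] by (auto simp: wr_polyhedron_def qf_eq_inner_outer)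
  qed
  ultimately show "c \<inter> d face_of c"
    using WR_min_vecs_nonempty[OF A(3)] by (auto intro: face_of_Inter)
next
  fix c assume "c \<in> WR_cells"
  then show "convex c"
    by (auto simp: WR_cells_def wr_cell_eq_wr_polyhedron convex_wr_polyhedron)
qed

theorem lemma3p5:
  fixes b1 b2 :: "mat4 set \<Rightarrow> mat4" and \<alpha>1 \<alpha>2 :: "mat4 set"
  assumes "valid_bary b1 WR_cells"
    and "valid_bary b2 (bary_sd b1 V1_cells)"
    and "\<alpha>1 \<in> V1_cells" and "\<alpha>2 \<in> V1_cells" and "\<alpha>1 \<noteq> \<alpha>2"
    and "\<alpha>1 \<inter> \<alpha>2 \<in> V1_cells"
  shows "N_alpha_int b1 b2 \<alpha>1 \<inter> N_alpha_int b1 b2 \<alpha>2 = N_alpha_int b1 b2 (\<alpha>1 \<inter> \<alpha>2)"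
proof -
  have F: "V1_cells \<subseteq> WR_cells" by (auto simp: V1_cells_def)
  then have b1: "valid_bary b1 V1_cells" using assms(1) by (auto simp: valid_bary_def)
  have \<alpha>: "\<alpha>1 \<in> WR_cells" "\<alpha>2 \<in> WR_cells" using F assms(3,4) by auto
  have "N_alpha b1 b2 \<alpha>1 \<inter> N_alpha b1 b2 \<alpha>2 = N_alpha b1 b2 (\<alpha>1 \<inter> \<alpha>2)"
    unfolding N_alpha_def by (rule sd_nbhd_bary_sd_Int[OF face_compatible_WR_cells F b1 assms(2) \<alpha>])
  then show ?thesis by (simp add: N_alpha_int_def flip: interior_of_Int)
qed

end
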